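(* Let $c\in(0,1)$, let $h>0$ be real, let $1\le l<n$ be integers and let $\pi$ be any collaborating cryptogenography protocol. Then \[ \mathrm{Succ}(h,l,n,\pi)\le 1-\frac{ch+l\log(1-c)+lc\log e-c}{h}. \]
   Context: All logarithms are base $2$; $e$ is the base of the natural logarithm. Collaborating cryptogenography protocol: there are $n$ players $\mathrm{plr}_1,\dots,\mathrm{plr}_n$; a secret $X$ (finitely supported) and indicators $L_1,\dots,L_n\in\{0,1\}$ ($L_i=1$ means $\mathrm{plr}_i$ knows $X$) have a joint distribution. A protocol $\pi$ specifies, for every possible partial transcript $t^k=(t_1,\dots,t_k)$ (the tuple of the first $k$ messages): whether communication stops; if not, which player $\mathrm{plr}_i$ sends the next message; and probability distributions $p_?$ and $(p_x)_{x}$ on a finite message set (depending on $t^k$). $\mathrm{plr}_i$ draws the next message, with fresh independent randomness, from $p_?$ if $L_i=0$ and from $p_x$ if $L_i=1$ and $X=x$. There is a number $\mathrm{length}(\pi)$ such that the protocol always stops after at most that many messages. $T$ denotes the random full transcript. The game $\mathrm{Succ}$: for real $h\ge0$ and integers $1\le l<n$, let $X$ be uniform on $\{1,\dots,2^{\lceil h\rceil}\}$ and, independently, let $(L_1,\dots,L_n)$ be uniform over the $0/1$-vectors with exactly $l$ ones. The players run a collaborating cryptogenography protocol $\pi$ with transcript $T$. Then Frank outputs a guess $F=f(T)$ of $X$, and Eve, seeing $T$ and $F$, outputs a player index $E=g(T,F)$. The players (and Frank) win if $F=X$ and $L_E=0$; otherwise Eve wins. $\mathrm{Succ}(h,l,n,\pi)=\max_f\min_g\Pr(F=X\text{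 and }L_E=0)$. *)

theory Defs
  imports "HOL-Probability.Probability"
begin

text \<open>For a partial transcript t (list of messages so far), \<open>\<pi> t = None\<close> means communication stops;
  \<open>\<pi> t = Some (i, p0, px)\<close> means player i sends the next message, drawn from p0 if
  player i does not know the secret, and from \<open>px x\<close> if he knows it and the secret is x.\<close>

type_synonym 'm protocol = "'m list \<Rightarrow> (nat \<times> 'm pmf \<times> (nat \<Rightarrow> 'm pmf)) option"

definition valid_protocol :: "nat \<Rightarrow> nat \<Rightarrow> 'm protocol \<Rightarrow> bool" where
  "valid_protocol n N \<pi> \<longleftrightarrow>
     (\<forall>t i p0 px. \<pi> t = Some (i, p0, px) \<longrightarrow>
        i \<in> {1..n} \<and> finite (set_pmf p0) \<and> (\<forall>x. finite (set_pmf (px x)))) \<and>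
     (\<forall>t. N \<le> length t \<longrightarrow> \<pi> t = None)"

text \<open>Distribution of the full transcript when the secret is x and K is the set of
  players who know it (L_i = 1 iff i \<in> K), starting from partial transcript t, with fuel k.\<close>
fun run :: "'m protocol \<Rightarrow> nat \<Rightarrow> nat \<Rightarrow> nat set \<Rightarrow> 'm list \<Rightarrow> 'm list pmf" where
  "run \<pi> 0 x K t = return_pmf t"
| "run \<pi> (Suc k) x K t =
     (case \<pi> t of
        None \<Rightarrow> return_pmf t
      | Some (i, p0, px) \<Rightarrow>
          bind_pmf (if i \<in> K then px x else p0) (\<lambda>m. run \<pi> k x K (t @ [m])))"

text \<open>Joint distribution of (X, set of knowing players, T) in the game Succ.\<close>
definition succ_game :: "real \<Rightarrow> nat \<Rightarrow> nat \<Rightarrow> 'm protocol \<Rightarrow> nat \<Rightarrow> (nat \<times> nat set \<times> 'm list) pmf" where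
  "succ_game h l n \<pi> N =
     bind_pmf (pmf_of_set {1..2 ^ nat \<lceil>h\<rceil>}) (\<lambda>x.
     bind_pmf (pmf_of_set {K. K \<subseteq> {1..n} \<and> card K = l}) (\<lambda>K.
     bind_pmf (run \<pi> N x K []) (\<lambda>T. return_pmf (x, K, T))))"

text \<open>Winning probability of the players for Frank's strategy f and Eve's strategy g.\<close>
definition succ_win :: "real \<Rightarrow> nat \<Rightarrow> nat \<Rightarrow> 'm protocol \<Rightarrow> nat \<Rightarrow>
    ('m list \<Rightarrow> nat) \<Rightarrow> ('m list \<Rightarrow> nat \<Rightarrow> nat) \<Rightarrow> real" where
  "succ_win h l n \<pi> N f g =
     measure_pmf.prob (succ_game h l n \<pi> N)
       {(x, K, T). f T = x \<and> g T (f T) \<notin> K}"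

definition Succ :: "real \<Rightarrow> nat \<Rightarrow> nat \<Rightarrow> 'm protocol \<Rightarrow> nat \<Rightarrow> real" where
  "Succ h l n \<pi> N =
     (SUP f. INF g \<in> {g. \<forall>T y. g T y \<in> {1..n}}. succ_win h l n \<pi> N f g)"

end

theory Submission
  imports Defs
begin

text \<open>
  Eve uses the following
  strategy: after seeing the transcript t and Frank's guess y, she accuses the player
  whose messages are most likely to have been sent by a player who knows the secret y,
  i.e. who maximises the likelihood ratio a_i / b_i of player i's messages under
  "i knows y" versus "i does not know the secret".

  The proof has three ingredients.
  (1) Rectangle property: the probability of a transcript t, given the secret x and the
      set K of knowing players, is a product over players of a_i (for i in K) or b_i.
      Summing over knower sets turns these probabilities into elementary symmetric
      sums of the ratios r_i = a_i / b_i.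
  (2) A Maclaurin-type inequality for elementary symmetric sums e_k: if r_g is maximal,
      then (e_l(r without g) / C(n,l))^(l+1) <= (e_(l+1)(r) / C(n,l+1))^l.
      Combined with weighted AM-GM this bounds the winning probability, transcript by
      transcript, by a combination of the probabilities that l+1 players or no player
      know the secret; summing over transcripts gives Succ <= M^(-1/(l+1)) where
      M = 2^ceil(h) is the number of possible secrets.
  (3) An elementary estimate 2^(-h/(l+1)) <= 1 - (c h + l log(1-c) + l c log e - c)/h.
\<close>

section \<open>Elementary symmetric sums\<close>

definition esym :: "nat set \<Rightarrow> (nat \<Rightarrow> real) \<Rightarrow> nat \<Rightarrow> real" where
  "esym J r k = (\<Sum>K\<in>{K. K \<subseteq> J \<and> card K = k}. \<Prod>i\<in>K. r i)"

lemma esym_0: "finite J \<Longrightarrow> esym J r 0 = 1"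
proof -
  assume "finite J"
  then have "{K. K \<subseteq> J \<and> card K = 0} = {{}}"
    by (auto dest: finite_subset)
  then show ?thesis by (simp add: esym_def)
qed

lemma esym_nonneg: "(\<And>i. i \<in> J \<Longrightarrow> 0 \<le> r i) \<Longrightarrow> 0 \<le> esym J r k"
  unfolding esym_def by (intro sum_nonneg prod_nonneg) auto

lemma esym_terms_containing:
  assumes "finite J" "j \<in> J"
  shows "r j * esym (J - {j}) r k = (\<Sum>K\<in>{K. K \<subseteq> J \<and> card K = Suc k \<and> j \<in> K}. \<Prod>i\<in>K. r i)"
proof -
  have bij: "bij_betw (insert j) {K. K \<subseteq> J - {j} \<and> card K = k}
                                 {K. K \<subseteq> J \<and> card K = Suc k \<and> j \<in> K}"
  proof (rule bij_betw_byWitness[where f'="\<lambda>K. K - {j}"])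
    show "insert j ` {K. K \<subseteq> J - {j} \<and> card K = k} \<subseteq> {K. K \<subseteq> J \<and> card K = Suc k \<and> j \<in> K}"
    proof (rule image_subsetI)
      fix K assume K: "K \<in> {K. K \<subseteq> J - {j} \<and> card K = k}"
      then have "finite K" "j \<notin> K" using assms finite_subset by auto
      then show "insert j K \<in> {K. K \<subseteq> J \<and> card K = Suc k \<and> j \<in> K}" using K assms by auto
    qed
    show "(\<lambda>K. K - {j}) ` {K. K \<subseteq> J \<and> card K = Suc k \<and> j \<in> K} \<subseteq> {K. K \<subseteq> J - {j} \<and> card K = k}"
      using assms by (auto dest: finite_subset)
  qed auto
  have "r j * esym (J - {j}) r k = (\<Sum>K\<in>{K. K \<subseteq> J - {j} \<and> card K = k}. \<Prod>i\<in>insert j K. r i)"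
    unfolding esym_def sum_distrib_left
    using assms by (intro sum.cong refl) (subst prod.insert; auto intro: finite_subset)
  also have "\<dots> = (\<Sum>K\<in>{K. K \<subseteq> J \<and> card K = Suc k \<and> j \<in> K}. \<Prod>i\<in>K. r i)"
    by (rule sum.reindex_bij_betw[OF bij])
  finally show ?thesis .
qed

lemma esym_remove:
  assumes "finite J" "j \<in> J"
  shows "esym J r (Suc k) = esym (J - {j}) r (Suc k) + r j * esym (J - {j}) r k"
proof -
  have fin: "finite {K. K \<subseteq> J \<and> card K = Suc k}" using assms by auto
  have "esym J r (Suc k) = (\<Sum>K\<in>{K. K \<subseteq> J \<and> card K = Suc k} \<inter> {K. j \<notin> K}. \<Prod>i\<in>K. r i)
      + (\<Sum>K\<in>{K. K \<subseteq> J \<and> card K = Suc k} - {K. j \<notin> K}. \<Prod>i\<in>K. r i)"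
    unfolding esym_def by (rule sum.Int_Diff[OF fin])
  also have "{K. K \<subseteq> J \<and> card K = Suc k} \<inter> {K. j \<notin> K} = {K. K \<subseteq> J - {j} \<and> card K = Suc k}"
    by auto
  also have "{K. K \<subseteq> J \<and> card K = Suc k} - {K. j \<notin> K} = {K. K \<subseteq> J \<and> card K = Suc k \<and> j \<in> K}"
    by auto
  finally show ?thesis using esym_terms_containing[OF assms, of r k] by (simp add: esym_def)
qed

lemma esym_double_count:
  assumes "finite J"
  shows "real (Suc k) * esym J r (Suc k) = (\<Sum>j\<in>J. r j * esym (J - {j}) r k)"
proof -
  let ?S = "{K. K \<subseteq> J \<and> card K = Suc k}"
  have fin: "finite ?S" using assms by auto
  have "(\<Sum>j\<in>J. r j * esym (J - {j}) r k) = (\<Sum>j\<in>J. \<Sum>K\<in>{K \<in> ?S. j \<in> K}. \<Prod>i\<in>K. r i)"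
    using assms by (intro sum.cong refl) (auto simp: esym_terms_containing intro: sum.cong)
  also have "\<dots> = (\<Sum>K\<in>?S. \<Sum>j\<in>{j\<in>J. j \<in> K}. \<Prod>i\<in>K. r i)"
    by (rule sum.swap_restrict[OF assms fin])
  also have "\<dots> = (\<Sum>K\<in>?S. real (Suc k) * (\<Prod>i\<in>K. r i))"
  proof (rule sum.cong[OF refl])
    fix K assume "K \<in> ?S"
    then have "{j\<in>J. j \<in> K} = K" "card K = Suc k" by auto
    then show "(\<Sum>j\<in>{j\<in>J. j \<in> K}. \<Prod>i\<in>K. r i) = real (Suc k) * (\<Prod>i\<in>K. r i)" by simp
  qed
  finally show ?thesis by (simp add: esym_def sum_distrib_left)
qed

lemma esym_mono_set:
  assumes "finite J" "J' \<subseteq> J" "\<And>i. i \<in> J \<Longrightarrow> 0 \<le> r i"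
  shows "esym J' r k \<le> esym J r k"
  unfolding esym_def using assms by (intro sum_mono2) (auto intro!: prod_nonneg)

lemma esym_le_power_fact:
  assumes "finite J" "\<And>i. i \<in> J \<Longrightarrow> 0 \<le> r i"
  shows "esym J r k \<le> (sum r J) ^ k / fact k"
proof (induction k)
  case 0
  then show ?case using assms by (simp add: esym_0)
next
  case (Suc k)
  have "real (Suc k) * esym J r (Suc k) = (\<Sum>j\<in>J. r j * esym (J - {j}) r k)"
    by (rule esym_double_count[OF assms(1)])
  also have "\<dots> \<le> (\<Sum>j\<in>J. r j * esym J r k)"
    using assms by (intro sum_mono mult_left_mono esym_mono_set) auto
  also have "\<dots> = sum r J * esym J r k" by (simp add: sum_distrib_right)
  also have "\<dots> \<le> sum r J * ((sum r J) ^ k / fact k)"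
    using assms by (intro mult_left_mono Suc.IH sum_nonneg) auto
  finally have "real (Suc k) * esym J r (Suc k) \<le> (sum r J) ^ Suc k / fact k" by simp
  then have "esym J r (Suc k) \<le> ((sum r J) ^ Suc k / fact k) / real (Suc k)"
    by (simp add: pos_le_divide_eq mult_ac)
  also have "\<dots> = (sum r J) ^ Suc k / fact (Suc k)"
    by (simp add: fact_Suc divide_divide_eq_left mult.commute)
  finally show ?case .
qed

lemma esym_Newton_lower:
  assumes "finite J" "\<And>i. i \<in> J \<Longrightarrow> 0 \<le> r i" "\<And>i. i \<in> J \<Longrightarrow> r i \<le> m"
  shows "esym J r (Suc k) * (sum r J - real (Suc k) * m) \<le> real (Suc (Suc k)) * esym J r (Suc (Suc k))"
proof -
  have "real (Suc (Suc k)) * esym J r (Suc (Suc k)) = (\<Sum>j\<in>J. r j * esym (J - {j}) r (Suc k))"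
    by (rule esym_double_count[OF assms(1)])
  also have "\<dots> = (\<Sum>j\<in>J. r j * esym J r (Suc k) - r j * (r j * esym (J - {j}) r k))"
    using assms(1) by (intro sum.cong refl) (auto simp: esym_remove algebra_simps)
  also have "\<dots> = sum r J * esym J r (Suc k) - (\<Sum>j\<in>J. r j * (r j * esym (J - {j}) r k))"
    by (simp add: sum_subtractf sum_distrib_right)
  also have "\<dots> \<ge> sum r J * esym J r (Suc k) - (\<Sum>j\<in>J. m * (r j * esym (J - {j}) r k))"
    using assms by (intro diff_left_mono sum_mono mult_right_mono) (auto intro!: mult_nonneg_nonneg esym_nonneg)
  also have "(\<Sum>j\<in>J. m * (r j * esym (J - {j}) r k)) = m * (real (Suc k) * esym J r (Suc k))"
    by (simp only: esym_double_count[OF assms(1)] sum_distrib_left)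
  finally show ?thesis by (simp add: algebra_simps)
qed

lemma esym_remove_max_lower:
  assumes fin: "finite J" and g: "g \<in> J"
    and nonneg: "\<And>i. i \<in> J \<Longrightarrow> 0 \<le> r i" and max: "\<And>i. i \<in> J \<Longrightarrow> r i \<le> r g"
  shows "esym (J - {g}) r (Suc k) * sum r J \<le> real (Suc (Suc k)) * esym J r (Suc (Suc k))"
proof -
  let ?J = "J - {g}" and ?E = "esym (J - {g}) r (Suc k)"
  have sum_split: "sum r J = sum r ?J + r g" using fin g by (simp add: sum.remove)
  have "?E * (sum r ?J - real (Suc k) * r g) \<le> real (Suc (Suc k)) * esym ?J r (Suc (Suc k))"
    using fin nonneg max by (intro esym_Newton_lower) auto
  moreover have "esym J r (Suc (Suc k)) = esym ?J r (Suc (Suc k)) + r g * ?E"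
    by (rule esym_remove[OF fin g])
  ultimately show ?thesis using sum_split by (simp add: algebra_simps)
qed

lemma esym_remove_max_power:
  assumes fin: "finite J" and g: "g \<in> J" and l: "1 \<le> l"
    and nonneg: "\<And>i. i \<in> J \<Longrightarrow> 0 \<le> r i" and max: "\<And>i. i \<in> J \<Longrightarrow> r i \<le> r g"
  shows "esym (J - {g}) r l ^ Suc l * fact l \<le> (real (Suc l) * esym J r (Suc l)) ^ l"
proof -
  define E where "E = esym (J - {g}) r l"
  define S where "S = sum r J"
  have E0: "0 \<le> E" unfolding E_def using nonneg by (intro esym_nonneg) auto
  have S0: "0 \<le> S" unfolding S_def using nonneg by (intro sum_nonneg) auto
  have "fact l * E \<le> fact l * (sum r (J - {g}) ^ l / fact l)"
    unfolding E_def using fin nonneg by (intro mult_left_mono esym_le_power_fact) auto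
  also have "\<dots> \<le> S ^ l"
    unfolding S_def using fin nonneg
    by (auto intro!: power_mono sum_mono2 sum_nonneg)
  finally have "E ^ l * (fact l * E) \<le> E ^ l * S ^ l" using E0 by (intro mult_left_mono) auto
  also have "\<dots> = (E * S) ^ l" by (simp add: power_mult_distrib)
  also have "\<dots> \<le> (real (Suc l) * esym J r (Suc l)) ^ l"
  proof -
    obtain k where k: "l = Suc k" using l by (cases l) auto
    have "esym (J - {g}) r (Suc k) * sum r J \<le> real (Suc (Suc k)) * esym J r (Suc (Suc k))"
      by (rule esym_remove_max_lower[OF fin g]) (use nonneg max in auto)
    then have "E * S \<le> real (Suc l) * esym J r (Suc l)"
      unfolding E_def S_def k .
    then show ?thesis using E0 S0 by (intro power_mono) auto
  qed
  finally show ?thesis unfolding E_def by (simp add: algebra_simps)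
qed

lemma power_le_fact_choose: "l \<le> n \<Longrightarrow> (n - l) ^ l \<le> fact l * (n choose l)"
proof (induction l)
  case 0
  then show ?case by simp
next
  case (Suc l)
  have eq: "Suc l * (n choose Suc l) = (n - l) * (n choose l)"
    using binomial_absorption[of l n] binomial_absorb_comp[of n l] by simp
  have "(n - Suc l) ^ Suc l \<le> (n - l) * (n - l) ^ l"
    using power_mono[of "n - Suc l" "n - l" l] by (simp add: mult_le_mono)
  also have "\<dots> \<le> (n - l) * (fact l * (n choose l))" using Suc by simp
  also have "\<dots> = fact l * (Suc l * (n choose Suc l))" using eq by simp
  also have "\<dots> = fact (Suc l) * (n choose Suc l)" by (simp add: fact_Suc algebra_simps)
  finally show ?case .
qed

lemma normalized_power_bound:
  fixes E D :: real
  assumes l: "1 \<le> l" "l < n" and E0: "0 \<le> E"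
    and bound: "E ^ Suc l * fact l \<le> (real (Suc l) * D) ^ l"
  shows "(E / real (n choose l)) ^ Suc l \<le> (D / real (n choose Suc l)) ^ l"
proof -
  define C where "C = real (n choose l)"
  define C' where "C' = real (n choose Suc l)"
  have C0: "0 < C" and C'0: "0 < C'" and nl0: "0 < real (n - l)"
    unfolding C_def C'_def using l by auto
  have absorb: "real (Suc l) * C' = real (n - l) * C"
  proof -
    have "Suc l * (n choose Suc l) = (n - l) * (n choose l)"
      using binomial_absorption[of l n] binomial_absorb_comp[of n l] by simp
    then show ?thesis unfolding C_def C'_def by (metis of_nat_mult)
  qed
  have pf: "real (n - l) ^ l \<le> fact l * C"
  proof -
    have "(n - l) ^ l \<le> fact l * (n choose l)" using l by (intro power_le_fact_choose) auto
    then have "real ((n - l) ^ l) \<le> real (fact l * (n choose l))" by (simp only: of_nat_le_iff)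
    then show ?thesis unfolding C_def by simp
  qed
  have "(E / C) ^ Suc l = E ^ Suc l * fact l / (fact l * C * C ^ l)"
    by (simp add: power_divide)
  also have "\<dots> \<le> E ^ Suc l * fact l / (real (n - l) ^ l * C ^ l)"
    using pf E0 C0 nl0 by (intro frac_le mult_right_mono) auto
  also have "\<dots> = E ^ Suc l * fact l / (real (Suc l) * C') ^ l"
    using absorb by (simp add: power_mult_distrib)
  also have "\<dots> \<le> (real (Suc l) * D) ^ l / (real (Suc l) * C') ^ l"
    using bound C'0 by (intro divide_right_mono) auto
  also have "\<dots> = (D / C') ^ l"
    by (simp add: power_mult_distrib power_divide)
  finally show ?thesis unfolding C_def C'_def .
qed

lemma esym_remove_max_ratio:
  assumes fin: "finite J" and g: "g \<in> J" and l: "1 \<le> l" "l < n"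
    and nonneg: "\<And>i. i \<in> J \<Longrightarrow> 0 \<le> r i" and max: "\<And>i. i \<in> J \<Longrightarrow> r i \<le> r g"
  shows "(esym (J - {g}) r l / real (n choose l)) ^ Suc l
           \<le> (esym J r (Suc l) / real (n choose Suc l)) ^ l"
proof (rule normalized_power_bound[OF l])
  show "0 \<le> esym (J - {g}) r l" using nonneg by (intro esym_nonneg) auto
  show "esym (J - {g}) r l ^ Suc l * fact l \<le> (real (Suc l) * esym J r (Suc l)) ^ l"
    by (rule esym_remove_max_power[OF fin g l(1)]) (use nonneg max in auto)
qed


section \<open>Sums over knower sets of product likelihoods\<close>

definition knower_prod :: "nat set \<Rightarrow> (nat \<Rightarrow> real) \<Rightarrow> (nat \<Rightarrow> real) \<Rightarrow> nat set \<Rightarrow> real" where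
  "knower_prod I a b K = (\<Prod>i\<in>I. if i \<in> K then a i else b i)"

text \<open>The player Eve accuses: one whose likelihood ratio a g / b g is maximal, where a player
  with b g = 0 (who cannot have sent the transcript without knowing the secret) counts as
  maximal.\<close>
definition most_suspicious :: "nat set \<Rightarrow> (nat \<Rightarrow> real) \<Rightarrow> (nat \<Rightarrow> real) \<Rightarrow> nat \<Rightarrow> bool" where
  "most_suspicious I a b g \<longleftrightarrow> g \<in> I \<and>
     ((\<exists>i\<in>I. b i = 0) \<longrightarrow> b g = 0) \<and>
     ((\<forall>i\<in>I. 0 < b i) \<longrightarrow> (\<forall>j\<in>I. a j / b j \<le> a g / b g))"

lemma most_suspicious_exists:
  assumes "finite I" "I \<noteq> {}"
  shows "\<exists>g. most_suspicious I a b g"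
proof (cases "\<exists>i\<in>I. b i = 0")
  case True
  then obtain g where "g \<in> I" "b g = 0" by blast
  then have "most_suspicious I a b g" unfolding most_suspicious_def by auto
  then show ?thesis ..
next
  case False
  let ?ratio = "\<lambda>j. a j / b j"
  have "Max (?ratio ` I) \<in> ?ratio ` I" using assms by simp
  then obtain g where g: "g \<in> I" "?ratio g = Max (?ratio ` I)" by auto
  then have "\<forall>j\<in>I. ?ratio j \<le> ?ratio g" using assms(1) by simp
  then show ?thesis using g(1) False unfolding most_suspicious_def by auto
qed

lemma sum_knower_prod_esym:
  assumes fin: "finite I" and pos: "\<And>i. i \<in> I \<Longrightarrow> 0 < b i" and "J \<subseteq> I"
  shows "(\<Sum>K\<in>{K. K \<subseteq> J \<and> card K = k}. knower_prod I a b K)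
           = (\<Prod>i\<in>I. b i) * esym J (\<lambda>i. a i / b i) k"
proof -
  have "knower_prod I a b K = (\<Prod>i\<in>I. b i) * (\<Prod>i\<in>K. a i / b i)" if "K \<subseteq> I" for K
  proof -
    have nz: "\<And>i. i \<in> I \<Longrightarrow> b i \<noteq> 0" using pos by (metis less_irrefl)
    have "knower_prod I a b K = (\<Prod>i\<in>I. b i * (if i \<in> K then a i / b i else 1))"
      unfolding knower_prod_def by (intro prod.cong) (auto simp: nz)
    also have "\<dots> = (\<Prod>i\<in>I. b i) * (\<Prod>i\<in>I \<inter> K. a i / b i)"
      by (simp add: prod.distrib prod.inter_restrict[OF fin])
    finally show ?thesis using that by (simp add: Int_absorb1)
  qed
  then show ?thesis
    unfolding esym_def sum_distrib_left using assms(3) by (intro sum.cong) auto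
qed

lemma knower_prod_inequality:
  assumes fin: "finite I" and l: "1 \<le> l" "l < n"
    and a0: "\<And>i. i \<in> I \<Longrightarrow> 0 \<le> a i" and b0: "\<And>i. i \<in> I \<Longrightarrow> 0 \<le> b i"
    and g: "most_suspicious I a b g"
  shows "((\<Sum>K\<in>{K. K \<subseteq> I - {g} \<and> card K = l}. knower_prod I a b K) / real (n choose l)) ^ Suc l
     \<le> ((\<Sum>K\<in>{K. K \<subseteq> I \<and> card K = Suc l}. knower_prod I a b K) / real (n choose Suc l)) ^ l
        * knower_prod I a b {}"
proof (cases "\<exists>i\<in>I. b i = 0")
  case True
  then have "b g = 0" "g \<in> I" using g unfolding most_suspicious_def by auto
  then have "knower_prod I a b K = 0" if "g \<notin> K" for K
    unfolding knower_prod_def using fin that by (intro prod_zero) auto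
  then have "(\<Sum>K\<in>{K. K \<subseteq> I - {g} \<and> card K = l}. knower_prod I a b K) = 0"
    by (intro sum.neutral) auto
  moreover have "0 \<le> knower_prod I a b K" for K
    unfolding knower_prod_def using a0 b0 by (intro prod_nonneg) auto
  ultimately show ?thesis using l by (simp add: sum_nonneg)
next
  case False
  define r where "r i = a i / b i" for i
  define B where "B = (\<Prod>i\<in>I. b i)"
  have pos: "\<And>i. i \<in> I \<Longrightarrow> 0 < b i" using b0 False by (metis less_eq_real_def)
  have g: "g \<in> I" "\<And>i. i \<in> I \<Longrightarrow> r i \<le> r g"
    using g pos unfolding most_suspicious_def r_def by auto
  have B0: "0 < B" unfolding B_def using pos by (simp add: prod_pos)
  have r0: "\<And>i. i \<in> I \<Longrightarrow> 0 \<le> r i" unfolding r_def using a0 pos by (simp add: less_imp_le)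
  have le: "(esym (I - {g}) r l / real (n choose l)) ^ Suc l
      \<le> (esym I r (Suc l) / real (n choose Suc l)) ^ l"
    by (rule esym_remove_max_ratio[OF fin g(1) l]) (use r0 g in auto)
  have "(B * esym (I - {g}) r l / real (n choose l)) ^ Suc l
      \<le> (B * esym I r (Suc l) / real (n choose Suc l)) ^ l * B" (is "?lhs \<le> ?rhs")
  proof -
    have "?lhs = B ^ Suc l * (esym (I - {g}) r l / real (n choose l)) ^ Suc l"
      by (simp add: power_mult_distrib[symmetric])
    also have "\<dots> \<le> B ^ Suc l * (esym I r (Suc l) / real (n choose Suc l)) ^ l"
      using le B0 by (intro mult_left_mono) auto
    also have "\<dots> = ?rhs"
      by (simp add: power_mult_distrib[symmetric] mult_ac)
    finally show ?thesis .
  qed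
  moreover have "(\<Sum>K\<in>{K. K \<subseteq> I - {g} \<and> card K = l}. knower_prod I a b K) = B * esym (I - {g}) r l"
    unfolding B_def r_def by (rule sum_knower_prod_esym[OF fin pos]) auto
  moreover have "(\<Sum>K\<in>{K. K \<subseteq> I \<and> card K = Suc l}. knower_prod I a b K) = B * esym I r (Suc l)"
    unfolding B_def r_def by (rule sum_knower_prod_esym[OF fin pos]) auto
  moreover have "knower_prod I a b {} = B" unfolding knower_prod_def B_def by simp
  ultimately show ?thesis by simp
qed

section \<open>Real inequalities\<close>

lemma weighted_amgm:
  fixes u v w :: real and l :: nat
  assumes "0 \<le> u" "0 \<le> v" "0 \<le> w" "1 \<le> l" and le: "w ^ Suc l \<le> u ^ l * v"
  shows "w \<le> (real l * u + v) / real (Suc l)"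
proof (cases "w = 0")
  case True
  then show ?thesis using assms by simp
next
  case False
  then have w0: "0 < w" using assms by simp
  then have "0 < u ^ l * v" using le by (meson zero_less_power order_less_le_trans)
  then have "u \<noteq> 0" "v \<noteq> 0" using assms(4) by (auto simp: power_0_left)
  then have u0: "0 < u" and v0: "0 < v" using assms by auto
  define t where "t = 1 / real (Suc l)"
  have t01: "0 \<le> t" "t \<le> 1" and t': "1 - t = real l / real (Suc l)"
    unfolding t_def by (auto simp: field_simps)
  have "ln (w ^ Suc l) \<le> ln (u ^ l * v)" using le w0 by (intro ln_mono) auto
  then have "real (Suc l) * ln w \<le> real l * ln u + ln v"
    using w0 u0 v0 by (simp add: ln_mult ln_realpow algebra_simps)
  then have "ln w \<le> (real l * ln u + ln v) / real (Suc l)"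
    by (simp add: pos_le_divide_eq mult.commute)
  also have "\<dots> = (1 - t) * ln u + t * ln v"
    unfolding t' by (simp add: t_def add_divide_distrib)
  finally have "ln w \<le> (1 - t) * ln u + t * ln v" .
  then have "w \<le> exp ((1 - t) * ln u + t * ln v)" using w0 by (metis exp_le_cancel_iff exp_ln)
  also have "\<dots> \<le> (1 - t) * exp (ln u) + t * exp (ln v)"
    using convex_onD[OF exp_convex t01] by simp
  also have "\<dots> = (real l * u + v) / real (Suc l)"
    using u0 v0 unfolding t' by (simp add: t_def add_divide_distrib)
  finally show ?thesis .
qed


lemma scaled_amgm:
  fixes u z w M :: real and l :: nat
  assumes M: "0 < M" and "0 \<le> u" "0 \<le> z" "0 \<le> w" "1 \<le> l"
    and le: "w ^ Suc l \<le> u ^ l * z"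
  shows "w \<le> M powr (real l / real (Suc l)) * ((real l * (u / M) + z) / real (Suc l))"
proof -
  define Mt where "Mt = M powr (real l / real (Suc l))"
  have Mt0: "0 < Mt" unfolding Mt_def using M by simp
  have "Mt ^ Suc l = M powr (real (Suc l) * (real l / real (Suc l)))"
    unfolding Mt_def using M by (intro powr_power) simp
  then have Mt_pow: "Mt ^ Suc l = M ^ l" using M by (simp add: powr_realpow)
  have "(w / Mt) ^ Suc l = w ^ Suc l / M ^ l" by (simp only: power_divide Mt_pow)
  also have "\<dots> \<le> u ^ l * z / M ^ l" using le M by (intro divide_right_mono) auto
  also have "\<dots> = (u / M) ^ l * z" by (simp add: power_divide)
  finally have "w / Mt \<le> (real l * (u / M) + z) / real (Suc l)"
    using assms Mt0 by (intro weighted_amgm) auto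
  then show ?thesis unfolding Mt_def[symmetric] using Mt0 by (simp add: divide_le_eq mult.commute)
qed

lemma amgm_sum_bound:
  fixes w u :: "'x \<Rightarrow> 't \<Rightarrow> real" and z :: "'t \<Rightarrow> real" and \<phi> :: "'t \<Rightarrow> 'x" and M :: real
  assumes fin: "finite T" "finite X" and M: "0 < M" and l: "1 \<le> l"
    and nonneg: "\<And>x t. 0 \<le> w x t" "\<And>x t. 0 \<le> u x t" "\<And>t. 0 \<le> z t"
    and pointwise: "\<And>x t. w x t ^ Suc l \<le> u x t ^ l * z t"
    and mass_u: "(\<Sum>t\<in>T. \<Sum>x\<in>X. u x t) = M" and mass_z: "(\<Sum>t\<in>T. z t) = 1"
  shows "(\<Sum>t\<in>T. \<Sum>x\<in>X. if \<phi> t = x then w x t else 0) \<le> M powr (real l / real (Suc l))"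
proof -
  define \<alpha> where "\<alpha> = M powr (real l / real (Suc l)) * real l / real (Suc l) / M"
  define \<beta> where "\<beta> = M powr (real l / real (Suc l)) / real (Suc l)"
  have \<alpha>0: "0 \<le> \<alpha>" and \<beta>0: "0 \<le> \<beta>" unfolding \<alpha>_def \<beta>_def using M by auto
  have linear: "w x t \<le> \<alpha> * u x t + \<beta> * z t" for x t
  proof -
    have "w x t \<le> M powr (real l / real (Suc l)) * ((real l * (u x t / M) + z t) / real (Suc l))"
      by (rule scaled_amgm[OF M nonneg(2,3,1) l pointwise])
    also have "\<dots> = \<alpha> * u x t + \<beta> * z t"
    proof -
      have "m * ((real l * (u x t / M) + z t) / s) = m * real l / s / M * u x t + m / s * z t"
        if "0 < s" for m s :: real
        using that M by (simp add: field_simps)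
      then show ?thesis unfolding \<alpha>_def \<beta>_def by simp
    qed
    finally show ?thesis .
  qed
  have inner: "(\<Sum>x\<in>X. if \<phi> t = x then w x t else 0) \<le> \<alpha> * (\<Sum>x\<in>X. u x t) + \<beta> * z t" for t
  proof -
    have "(\<Sum>x\<in>X. if \<phi> t = x then w x t else 0)
        \<le> (\<Sum>x\<in>X. \<alpha> * u x t + (if \<phi> t = x then \<beta> * z t else 0))"
      using linear \<alpha>0 nonneg by (intro sum_mono) (auto intro: add_nonneg_nonneg mult_nonneg_nonneg)
    also have "\<dots> = \<alpha> * (\<Sum>x\<in>X. u x t) + (if \<phi> t \<in> X then \<beta> * z t else 0)"
      using fin by (simp add: sum.distrib sum_distrib_left sum.delta)
    also have "\<dots> \<le> \<alpha> * (\<Sum>x\<in>X. u x t) + \<beta> * z t"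
      using \<beta>0 nonneg by auto
    finally show ?thesis .
  qed
  have "(\<Sum>t\<in>T. \<Sum>x\<in>X. if \<phi> t = x then w x t else 0) \<le> (\<Sum>t\<in>T. \<alpha> * (\<Sum>x\<in>X. u x t) + \<beta> * z t)"
    by (intro sum_mono inner)
  also have "\<dots> = \<alpha> * M + \<beta>"
    by (simp add: sum.distrib sum_distrib_left[symmetric] mass_u mass_z)
  also have "\<dots> = M powr (real l / real (Suc l)) * (real l + 1) / real (Suc l)"
  proof -
    have "m * real l / s / M * M + m / s = m * (real l + 1) / s" for m s :: real
      using M by (simp add: add_divide_distrib distrib_left)
    then show ?thesis unfolding \<alpha>_def \<beta>_def .
  qed
  also have "\<dots> = M powr (real l / real (Suc l))" by (simp add: add.commute)
  finally show ?thesis .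
qed

lemma ln_one_plus_lower:
  fixes x :: real
  assumes "0 \<le> x"
  shows "2 * x / (2 + x) \<le> ln (1 + x)"
proof -
  let ?f = "\<lambda>t::real. ln (1 + t) - 2 * t / (2 + t)"
  have "?f 0 \<le> ?f x"
  proof (rule DERIV_nonneg_imp_increasing_open[OF assms])
    fix t :: real assume t: "0 < t" "t < x"
    have d: "(?f has_real_derivative (1 / (1 + t) - (2 * (2 + t) - 2 * t) / (2 + t)^2)) (at t)"
      using t by (auto intro!: derivative_eq_intros simp: power2_eq_square)
    have "(2 * (2 + t) - 2 * t) / (2 + t)^2 \<le> 1 / (1 + t)"
      using t by (simp add: divide_simps power2_eq_square) (simp add: algebra_simps)
    then show "\<exists>y. (?f has_real_derivative y) (at t) \<and> 0 \<le> y" using d by auto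
  next
    show "continuous_on {0..x} ?f"
      by (intro continuous_intros) (auto simp: add_pos_nonneg)
  qed
  then show ?thesis by simp
qed

text \<open>Writing
  u = 1 - c and b = h ln 2 / l, the right-hand side times h equals c + (l / ln 2)((1+b)u - 1 - ln u),
  and (1+b)u - 1 - ln u >= ln(1+b) >= 2b/(2+b) >= b exp(-h ln 2/(l+1)).\<close>
lemma exponent_bound:
  fixes c h :: real and l :: nat
  assumes c: "0 < c" "c < 1" and h: "0 < h" and l: "1 \<le> l"
  shows "2 powr (- h / real (Suc l)) \<le>
    1 - (c * h + real l * log 2 (1 - c) + real l * c * log 2 (exp 1) - c) / h"
proof -
  define L where "L = ln (2::real)"
  define u where "u = 1 - c"
  define b where "b = h * L / real l"
  define a where "a = h * L / real (Suc l)"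
  have L0: "0 < L" unfolding L_def by simp
  have u0: "0 < u" "u < 1" using c by (auto simp: u_def)
  have l0: "0 < real l" using l by simp
  have b0: "0 < b" unfolding b_def using h L0 l0 by simp
  have rhs: "h * (1 - (c * h + real l * log 2 (1 - c) + real l * c * log 2 (exp 1) - c) / h)
      = c + (real l / L) * ((1 + b) * u - 1 - ln u)"
    unfolding b_def u_def L_def log_def using h l0 by (simp add: field_simps)
  have half: "b / 2 \<le> a"
  proof -
    have "real (Suc l) \<le> 2 * real l" using l by simp
    then have "h * L / (2 * real l) \<le> h * L / real (Suc l)"
      using h L0 by (intro divide_left_mono) auto
    then show ?thesis unfolding a_def b_def by simp
  qed
  have "ln ((1 + b) * u) \<le> (1 + b) * u - 1" using b0 u0 by (intro ln_le_minus_one) simp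
  then have ln_step: "ln (1 + b) \<le> (1 + b) * u - 1 - ln u" using b0 u0 by (simp add: ln_mult)
  have exp_step: "b * exp (- a) \<le> ln (1 + b)"
  proof -
    have "1 + b / 2 \<le> exp a" using exp_ge_add_one_self[of a] half by linarith
    then have "exp (- a) \<le> 1 / (1 + b / 2)" using b0 by (simp add: exp_minus field_simps)
    then have "b * exp (- a) \<le> b * (1 / (1 + b / 2))" using b0 by (intro mult_left_mono) auto
    also have "\<dots> = 2 * b / (2 + b)" using b0 by (simp add: field_simps)
    also have "\<dots> \<le> ln (1 + b)" using b0 by (intro ln_one_plus_lower) simp
    finally show ?thesis .
  qed
  have "h * 2 powr (- h / real (Suc l)) = (real l / L) * (b * exp (- a))"
    unfolding powr_def a_def b_def L_def using l0 by simp
  also have "\<dots> \<le> (real l / L) * ((1 + b) * u - 1 - ln u)"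
    using exp_step ln_step L0 l0 by (intro mult_left_mono) auto
  also have "\<dots> \<le> h * (1 - (c * h + real l * log 2 (1 - c) + real l * c * log 2 (exp 1) - c) / h)"
    using rhs c by simp
  finally show ?thesis using h by simp
qed


section \<open>Transcript probabilities\<close>

definition run_path :: "'m protocol \<Rightarrow> nat \<Rightarrow> 'm list \<Rightarrow> 'm list \<Rightarrow> bool" where
  "run_path \<pi> k t0 t \<longleftrightarrow> take (length t0) t = t0 \<and> length t0 \<le> length t \<and>
     (\<forall>j. length t0 \<le> j \<and> j < length t \<longrightarrow> \<pi> (take j t) \<noteq> None) \<and>
     length t \<le> length t0 + k \<and> (length t = length t0 + k \<or> \<pi> t = None)"

definition step_prob :: "'m protocol \<Rightarrow> nat \<Rightarrow> nat set \<Rightarrow> 'm list \<Rightarrow> nat \<Rightarrow> real" where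
  "step_prob \<pi> x K t j = (case \<pi> (take j t) of None \<Rightarrow> 1
     | Some (i, p0, px) \<Rightarrow> pmf (if i \<in> K then px x else p0) (t ! j))"

lemma run_path_0: "run_path \<pi> 0 t0 t \<longleftrightarrow> t = t0"
  unfolding run_path_def by (auto simp: take_all)

lemma run_path_stop:
  assumes "\<pi> t0 = None"
  shows "run_path \<pi> (Suc k) t0 t \<longleftrightarrow> t = t0"
proof
  assume path: "run_path \<pi> (Suc k) t0 t"
  show "t = t0"
  proof (rule ccontr)
    assume "t \<noteq> t0"
    with path have "length t0 < length t" unfolding run_path_def by (metis le_neq_implies_less take_all)
    with path assms show False unfolding run_path_def by auto
  qed
qed (use assms in \<open>auto simp: run_path_def\<close>)

lemma run_path_Suc:
  assumes "\<pi> t0 \<noteq> None"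
  shows "run_path \<pi> (Suc k) t0 t \<longleftrightarrow> length t0 < length t \<and> run_path \<pi> k (t0 @ [t ! length t0]) t"
proof
  assume path: "run_path \<pi> (Suc k) t0 t"
  have lt: "length t0 < length t"
  proof (rule ccontr)
    assume "\<not> length t0 < length t"
    with path have "t = t0" unfolding run_path_def by (metis le_neq_implies_less take_all)
    with path assms show False unfolding run_path_def by simp
  qed
  have "take (Suc (length t0)) t = t0 @ [t ! length t0]"
    using path lt unfolding run_path_def by (simp add: take_Suc_conv_app_nth)
  then show "length t0 < length t \<and> run_path \<pi> k (t0 @ [t ! length t0]) t"
    using path lt unfolding run_path_def by auto
next
  assume a: "length t0 < length t \<and> run_path \<pi> k (t0 @ [t ! length t0]) t"
  then have tk: "take (Suc (length t0)) t = t0 @ [t ! length t0]" unfolding run_path_def by simp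
  have prefix: "take (length t0) t = t0"
  proof -
    have "take (length t0) t = take (length t0) (take (Suc (length t0)) t)" by simp
    also have "\<dots> = t0" unfolding tk by simp
    finally show ?thesis .
  qed
  have "\<pi> (take j t) \<noteq> None" if "length t0 \<le> j" "j < length t" for j
    using that a assms prefix unfolding run_path_def by (cases "j = length t0") auto
  then show "run_path \<pi> (Suc k) t0 t" using a prefix unfolding run_path_def by auto
qed

lemma integral_pmf_single_point:
  fixes f :: "'a \<Rightarrow> real"
  assumes "\<And>m. m \<noteq> m0 \<Longrightarrow> f m = 0"
  shows "(\<integral>m. f m \<partial>measure_pmf d) = f m0 * pmf d m0"
  using integral_measure_pmf_real[of "{m0}" d f] assms by auto

lemma pmf_run:
  "pmf (run \<pi> k x K t0) t =
     (if run_path \<pi> k t0 t then (\<Prod>j\<in>{length t0..<length t}. step_prob \<pi> x K t j) else 0)"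
proof (induction k arbitrary: t0)
  case 0
  then show ?case by (auto simp: run_path_0 pmf_return)
next
  case (Suc k)
  show ?case
  proof (cases "\<pi> t0")
    case None
    then show ?thesis by (auto simp: run_path_stop pmf_return)
  next
    case (Some p)
    obtain i p0 px where p: "p = (i, p0, px)" by (cases p) auto
    define d where "d = (if i \<in> K then px x else p0)"
    define m0 where "m0 = t ! length t0"
    have "pmf (run \<pi> (Suc k) x K t0) t = (\<integral>m. pmf (run \<pi> k x K (t0 @ [m])) t \<partial>measure_pmf d)"
      using Some p by (simp add: d_def pmf_bind)
    also have "\<dots> = pmf (run \<pi> k x K (t0 @ [m0])) t * pmf d m0"
    proof (rule integral_pmf_single_point)
      fix m assume "m \<noteq> m0"
      then have "\<not> run_path \<pi> k (t0 @ [m]) t"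
        unfolding run_path_def m0_def
        by (metis (no_types, lifting) Suc_le_eq length_append_singleton nth_append_length nth_take lessI)
      then show "pmf (run \<pi> k x K (t0 @ [m])) t = 0" using Suc.IH by simp
    qed
    also have "\<dots> = (if run_path \<pi> (Suc k) t0 t then (\<Prod>j\<in>{length t0..<length t}. step_prob \<pi> x K t j) else 0)"
    proof (cases "run_path \<pi> (Suc k) t0 t")
      case True
      then have lt: "length t0 < length t" and path: "run_path \<pi> k (t0 @ [m0]) t"
        using run_path_Suc[of \<pi> t0 k t] Some by (auto simp: m0_def)
      have "take (length t0) t = t0" using True unfolding run_path_def by simp
      then have "step_prob \<pi> x K t (length t0) = pmf d m0"
        unfolding step_prob_def using Some p by (simp add: d_def m0_def)
      moreover have "(\<Prod>j\<in>{length t0..<length t}. step_prob \<pi> x K t j)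
          = step_prob \<pi> x K t (length t0) * (\<Prod>j\<in>{Suc (length t0)..<length t}. step_prob \<pi> x K t j)"
        using lt by (simp add: prod.atLeast_Suc_lessThan)
      ultimately show ?thesis using True path Suc.IH[of "t0 @ [m0]"] by simp
    next
      case False
      then have "\<not> run_path \<pi> k (t0 @ [m0]) t"
        using run_path_Suc[of \<pi> t0 k t] Some unfolding m0_def run_path_def by auto
      then show ?thesis using False Suc.IH[of "t0 @ [m0]"] by simp
    qed
    finally show ?thesis .
  qed
qed

lemma finite_run:
  assumes "valid_protocol n N \<pi>"
  shows "finite (set_pmf (run \<pi> k x K t0))"
proof (induction k arbitrary: t0)
  case 0
  then show ?case by simp
next
  case (Suc k)
  show ?case
  proof (cases "\<pi> t0")
    case None
    then show ?thesis by simp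
  next
    case (Some p)
    obtain i p0 px where p: "p = (i, p0, px)" by (cases p) auto
    have "finite (set_pmf p0)" "finite (set_pmf (px x))"
      using assms Some p unfolding valid_protocol_def by blast+
    then show ?thesis using Some p Suc.IH by auto
  qed
qed

definition sender :: "'m protocol \<Rightarrow> 'm list \<Rightarrow> nat \<Rightarrow> nat" where
  "sender \<pi> t j = fst (the (\<pi> (take j t)))"

definition know_lik :: "'m protocol \<Rightarrow> nat \<Rightarrow> nat \<Rightarrow> 'm list \<Rightarrow> real" where
  "know_lik \<pi> i x t =
     (\<Prod>j\<in>{j. j < length t \<and> sender \<pi> t j = i}. pmf (snd (snd (the (\<pi> (take j t)))) x) (t ! j))"

definition ignorant_lik :: "'m protocol \<Rightarrow> nat \<Rightarrow> 'm list \<Rightarrow> real" where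
  "ignorant_lik \<pi> i t =
     (\<Prod>j\<in>{j. j < length t \<and> sender \<pi> t j = i}. pmf (fst (snd (the (\<pi> (take j t))))) (t ! j))"

lemma know_lik_nonneg: "0 \<le> know_lik \<pi> i x t"
  unfolding know_lik_def by (intro prod_nonneg) auto

lemma ignorant_lik_nonneg: "0 \<le> ignorant_lik \<pi> i t"
  unfolding ignorant_lik_def by (intro prod_nonneg) auto

text \<open>Rectangle property: grouping the messages of a full transcript by sender, its probability
  factors into one likelihood per player, depending only on whether that player knows x.\<close>
lemma pmf_run_knower_prod:
  assumes v: "valid_protocol n N \<pi>"
  shows "pmf (run \<pi> N x K []) t =
    (if run_path \<pi> N [] t
     then knower_prod {1..n} (\<lambda>i. know_lik \<pi> i x t) (\<lambda>i. ignorant_lik \<pi> i t) K else 0)"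
proof (cases "run_path \<pi> N [] t")
  case True
  have speaks: "\<exists>i p0 px. \<pi> (take j t) = Some (i, p0, px)" if "j < length t" for j
    using True that unfolding run_path_def by auto
  have sender: "sender \<pi> t j \<in> {1..n}" if "j < length t" for j
    using speaks[OF that] v unfolding valid_protocol_def sender_def by fastforce
  have step: "step_prob \<pi> x K t j = (if sender \<pi> t j \<in> K
        then pmf (snd (snd (the (\<pi> (take j t)))) x) (t ! j)
        else pmf (fst (snd (the (\<pi> (take j t))))) (t ! j))" if "j < length t" for j
    using speaks[OF that] unfolding step_prob_def sender_def by auto
  have "(\<Prod>j\<in>{0..<length t}. step_prob \<pi> x K t j)
      = (\<Prod>i\<in>{1..n}. \<Prod>j\<in>{j \<in> {0..<length t}. sender \<pi> t j = i}. step_prob \<pi> x K t j)"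
    by (rule prod.group[symmetric]) (use sender in auto)
  also have "\<dots> = knower_prod {1..n} (\<lambda>i. know_lik \<pi> i x t) (\<lambda>i. ignorant_lik \<pi> i t) K"
    unfolding knower_prod_def know_lik_def ignorant_lik_def
    by (intro prod.cong refl) (auto intro!: prod.cong simp: step)
  finally show ?thesis using True by (simp add: pmf_run)
qed (simp add: pmf_run)


section \<open>The game\<close>

lemma prob_bind_pmf_of_set:
  assumes "A \<noteq> {}" "finite A" "\<And>a. a \<in> A \<Longrightarrow> finite (set_pmf (F a))"
  shows "measure_pmf.prob (bind_pmf (pmf_of_set A) F) E
           = (\<Sum>a\<in>A. measure_pmf.prob (F a) E) / real (card A)"
proof -
  have "measure_pmf.prob (bind_pmf (pmf_of_set A) F) E
      = measure_pmf.expectation (bind_pmf (pmf_of_set A) F) (indicator E)" by simp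
  also have "\<dots> = (\<Sum>a\<in>A. measure_pmf.expectation (F a) (indicator E) /\<^sub>R real (card A))"
    by (rule pmf_expectation_bind_pmf_of_set[OF assms])
  finally show ?thesis by (simp add: sum_divide_distrib divide_inverse_commute sum_distrib_left)
qed

lemma prob_bind_return_finite:
  assumes "finite T" "set_pmf p \<subseteq> T"
  shows "measure_pmf.prob (bind_pmf p (\<lambda>t. return_pmf (\<phi> t))) E = (\<Sum>t\<in>T. if \<phi> t \<in> E then pmf p t else 0)"
proof -
  have "measure_pmf.prob (bind_pmf p (\<lambda>t. return_pmf (\<phi> t))) E
      = measure_pmf.expectation (bind_pmf p (\<lambda>t. return_pmf (\<phi> t))) (indicator E)" by simp
  also have "\<dots> = (\<Sum>t\<in>T. pmf p t *\<^sub>R measure_pmf.expectation (return_pmf (\<phi> t)) (indicator E))"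
    by (rule pmf_expectation_bind[OF assms(1) _ assms(2)]) simp
  finally show ?thesis by (auto simp: indicator_def intro!: sum.cong)
qed

definition transcripts :: "'m protocol \<Rightarrow> nat \<Rightarrow> nat \<Rightarrow> real \<Rightarrow> 'm list set" where
  "transcripts \<pi> n N h = (\<Union>x\<in>{1..(2::nat) ^ nat \<lceil>h\<rceil>}. \<Union>K\<in>Pow {1..n}. set_pmf (run \<pi> N x K []))"

lemma finite_transcripts: "valid_protocol n N \<pi> \<Longrightarrow> finite (transcripts \<pi> n N h)"
  unfolding transcripts_def by (intro finite_UN_I finite_run) simp_all

lemma sum_pmf_transcripts:
  assumes "valid_protocol n N \<pi>" "x \<in> {1..(2::nat) ^ nat \<lceil>h\<rceil>}" "K \<subseteq> {1..n}"
  shows "(\<Sum>t\<in>transcripts \<pi> n N h. pmf (run \<pi> N x K []) t) = 1"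
proof (rule sum_pmf_eq_1)
  show "finite (transcripts \<pi> n N h)" by (rule finite_transcripts[OF assms(1)])
  show "set_pmf (run \<pi> N x K []) \<subseteq> transcripts \<pi> n N h"
    unfolding transcripts_def using assms(2,3) by blast
qed

lemma sum_pmf_transcripts_family:
  assumes "valid_protocol n N \<pi>" "\<And>K. K \<in> Ks \<Longrightarrow> K \<subseteq> {1..n}"
  shows "(\<Sum>t\<in>transcripts \<pi> n N h. \<Sum>x\<in>{1..(2::nat) ^ nat \<lceil>h\<rceil>}. \<Sum>K\<in>Ks. pmf (run \<pi> N x K []) t)
           = real (2 ^ nat \<lceil>h\<rceil>) * real (card Ks)"
proof -
  have "(\<Sum>t\<in>transcripts \<pi> n N h. \<Sum>x\<in>{1..(2::nat) ^ nat \<lceil>h\<rceil>}. \<Sum>K\<in>Ks. pmf (run \<pi> N x K []) t)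
      = (\<Sum>x\<in>{1..(2::nat) ^ nat \<lceil>h\<rceil>}. \<Sum>K\<in>Ks. \<Sum>t\<in>transcripts \<pi> n N h. pmf (run \<pi> N x K []) t)"
    by (subst sum.swap) (simp add: sum.swap[of _ "transcripts \<pi> n N h"])
  also have "\<dots> = (\<Sum>x\<in>{1..(2::nat) ^ nat \<lceil>h\<rceil>}. \<Sum>K\<in>Ks. 1)"
    using assms by (intro sum.cong refl sum_pmf_transcripts) auto
  finally show ?thesis by simp
qed

lemma succ_win_as_sum:
  fixes \<pi> :: "'m protocol" and h :: real
  assumes v: "valid_protocol n N \<pi>" and l_le_n: "l \<le> n"
  defines "X \<equiv> {1..(2::nat) ^ nat \<lceil>h\<rceil>}" and "Ks \<equiv> {K. K \<subseteq> {1..n} \<and> card K = l}"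
  shows "succ_win h l n \<pi> N f g =
    (\<Sum>t\<in>transcripts \<pi> n N h. \<Sum>x\<in>X.
       if f t = x then (\<Sum>K\<in>Ks. if g t x \<notin> K then pmf (run \<pi> N x K []) t else 0) else 0)
      / (real (card X) * real (card Ks))"
proof -
  let ?T = "transcripts \<pi> n N h"
  define E where "E = {(x, K, T). f T = x \<and> g T (f T) \<notin> K}"
  have Ks: "finite Ks" "Ks \<noteq> {}"
  proof -
    show "finite Ks" unfolding Ks_def by (rule finite_subset[of _ "Pow {1..n}"]) auto
    have "{1..l} \<in> Ks" unfolding Ks_def using l_le_n by auto
    then show "Ks \<noteq> {}" by auto
  qed
  have X: "finite X" "X \<noteq> {}" unfolding X_def by simp_all
  have inner: "measure_pmf.prob (bind_pmf (run \<pi> N x K []) (\<lambda>t. return_pmf (x, K, t))) E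
      = (\<Sum>t\<in>?T. if f t = x \<and> g t x \<notin> K then pmf (run \<pi> N x K []) t else 0)"
    if "x \<in> X" "K \<in> Ks" for x K
  proof -
    have support: "set_pmf (run \<pi> N x K []) \<subseteq> ?T"
      using that unfolding transcripts_def X_def Ks_def by blast
    show ?thesis unfolding prob_bind_return_finite[OF finite_transcripts[OF v] support] E_def
      by (intro sum.cong) auto
  qed
  have "succ_win h l n \<pi> N f g =
      (\<Sum>x\<in>X. (\<Sum>K\<in>Ks. measure_pmf.prob (bind_pmf (run \<pi> N x K []) (\<lambda>t. return_pmf (x, K, t))) E)
         / real (card Ks)) / real (card X)"
    unfolding succ_win_def succ_game_def E_def[symmetric] X_def[symmetric] Ks_def[symmetric]
    using X Ks by (simp add: prob_bind_pmf_of_set finite_run[OF v] set_pmf_of_set)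
  also have "\<dots> = (\<Sum>x\<in>X. \<Sum>K\<in>Ks. \<Sum>t\<in>?T. if f t = x \<and> g t x \<notin> K then pmf (run \<pi> N x K []) t else 0)
      / (real (card X) * real (card Ks))"
    by (simp add: inner sum_divide_distrib mult.commute)
  also have "(\<Sum>x\<in>X. \<Sum>K\<in>Ks. \<Sum>t\<in>?T. if f t = x \<and> g t x \<notin> K then pmf (run \<pi> N x K []) t else 0)
      = (\<Sum>t\<in>?T. \<Sum>x\<in>X. \<Sum>K\<in>Ks. if f t = x \<and> g t x \<notin> K then pmf (run \<pi> N x K []) t else 0)"
    by (subst sum.swap) (simp add: sum.swap[of _ Ks])
  also have "\<dots> = (\<Sum>t\<in>?T. \<Sum>x\<in>X.
       if f t = x then (\<Sum>K\<in>Ks. if g t x \<notin> K then pmf (run \<pi> N x K []) t else 0) else 0)"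
    by (intro sum.cong refl) (auto intro: sum.cong)
  finally show ?thesis .
qed

definition eve :: "'m protocol \<Rightarrow> nat \<Rightarrow> 'm list \<Rightarrow> nat \<Rightarrow> nat" where
  "eve \<pi> n t y = (SOME g. most_suspicious {1..n} (\<lambda>i. know_lik \<pi> i y t) (\<lambda>i. ignorant_lik \<pi> i t) g)"

lemma eve_most_suspicious:
  "1 \<le> n \<Longrightarrow> most_suspicious {1..n} (\<lambda>i. know_lik \<pi> i y t) (\<lambda>i. ignorant_lik \<pi> i t) (eve \<pi> n t y)"
  unfolding eve_def by (rule someI_ex, rule most_suspicious_exists) auto

lemma eve_range: "1 \<le> n \<Longrightarrow> eve \<pi> n t y \<in> {1..n}"
  using eve_most_suspicious unfolding most_suspicious_def by blast

lemma eve_pointwise: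
  fixes \<pi> :: "'m protocol"
  assumes v: "valid_protocol n N \<pi>" and l: "1 \<le> l" "l < n"
  shows "((\<Sum>K\<in>{K. K \<subseteq> {1..n} \<and> card K = l}.
             if eve \<pi> n t x \<notin> K then pmf (run \<pi> N x K []) t else 0) / real (n choose l)) ^ Suc l
      \<le> ((\<Sum>K\<in>{K. K \<subseteq> {1..n} \<and> card K = Suc l}. pmf (run \<pi> N x K []) t) / real (n choose Suc l)) ^ l
         * pmf (run \<pi> N x' {} []) t"
proof (cases "run_path \<pi> N [] t")
  case False
  then have zero: "pmf (run \<pi> N y K []) t = 0" for y K by (simp add: pmf_run_knower_prod[OF v])
  have "(\<Sum>K\<in>{K. K \<subseteq> {1..n} \<and> card K = l}.
      if eve \<pi> n t x \<notin> K then pmf (run \<pi> N x K []) t else 0) = 0"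
    by (intro sum.neutral) (simp add: zero)
  then show ?thesis using l by (simp add: zero)
next
  case True
  let ?I = "{1..n::nat}" and ?g = "eve \<pi> n t x"
  let ?P = "knower_prod ?I (\<lambda>i. know_lik \<pi> i x t) (\<lambda>i. ignorant_lik \<pi> i t)"
  have P: "pmf (run \<pi> N y K []) t = knower_prod ?I (\<lambda>i. know_lik \<pi> i y t) (\<lambda>i. ignorant_lik \<pi> i t) K"
    for y K using True by (simp add: pmf_run_knower_prod[OF v])
  have empty: "pmf (run \<pi> N x' {} []) t = ?P {}"
    unfolding P knower_prod_def by simp
  have avoid: "(\<Sum>K\<in>{K. K \<subseteq> ?I \<and> card K = l}. if ?g \<notin> K then pmf (run \<pi> N x K []) t else 0)
      = (\<Sum>K\<in>{K. K \<subseteq> ?I - {?g} \<and> card K = l}. ?P K)"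
    unfolding P by (subst sum.inter_filter[symmetric]) (auto intro!: sum.cong)
  have larger: "(\<Sum>K\<in>{K. K \<subseteq> ?I \<and> card K = Suc l}. pmf (run \<pi> N x K []) t)
      = (\<Sum>K\<in>{K. K \<subseteq> ?I \<and> card K = Suc l}. ?P K)"
    unfolding P ..
  have n: "1 \<le> n" using l by simp
  show ?thesis
    unfolding avoid empty larger
    using l eve_most_suspicious[OF n, of \<pi> x t]
    by (intro knower_prod_inequality) (auto intro: know_lik_nonneg ignorant_lik_nonneg)
qed


lemma eve_win_bound:
  fixes \<pi> :: "'m protocol" and h :: real and f :: "'m list \<Rightarrow> nat"
  assumes v: "valid_protocol n N \<pi>" and l: "1 \<le> l" "l < n"
  shows "succ_win h l n \<pi> N f (eve \<pi> n) \<le> real ((2::nat) ^ nat \<lceil>h\<rceil>) powr (- 1 / real (Suc l))"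
proof -
  define M where "M = real ((2::nat) ^ nat \<lceil>h\<rceil>)"
  define X where "X = {1..(2::nat) ^ nat \<lceil>h\<rceil>}"
  define Ks where "Ks = {K. K \<subseteq> {1..n} \<and> card K = l}"
  define Ks' where "Ks' = {K. K \<subseteq> {1..n} \<and> card K = Suc l}"
  define T where "T = transcripts \<pi> n N h"
  define P where "P K x t = pmf (run \<pi> N x K []) t" for K x t
  define C where "C = real (n choose l)"
  define C' where "C' = real (n choose Suc l)"
  define W where "W x t = (\<Sum>K\<in>Ks. if eve \<pi> n t x \<notin> K then P K x t else 0)" for x t
  define D where "D x t = (\<Sum>K\<in>Ks'. P K x t)" for x t
  have W0: "0 \<le> W x t" and D0: "0 \<le> D x t" for x t
    unfolding W_def D_def P_def by (auto intro!: sum_nonneg)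
  have M0: "0 < M" and C0: "0 < C" and C'0: "0 < C'"
    unfolding M_def C_def C'_def using l by auto
  have X: "finite X" "real (card X) = M" unfolding X_def M_def by auto
  have card_Ks: "card Ks = n choose l" "card Ks' = n choose Suc l"
    unfolding Ks_def Ks'_def using n_subsets[of "{1..n}"] by auto
  have "succ_win h l n \<pi> N f (eve \<pi> n) = (\<Sum>t\<in>T. \<Sum>x\<in>X. if f t = x then W x t else 0) / (M * C)"
    unfolding succ_win_as_sum[OF v less_imp_le[OF l(2)]]
    using X card_Ks unfolding W_def P_def T_def X_def Ks_def C_def by simp
  also have "\<dots> = (\<Sum>t\<in>T. \<Sum>x\<in>X. if f t = x then W x t / C else 0) / M"
    unfolding sum_divide_distrib by (intro sum.cong refl) (simp add: mult.commute)
  also have "\<dots> \<le> M powr (real l / real (Suc l)) / M"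
  proof (intro divide_right_mono amgm_sum_bound)
    show "(W x t / C) ^ Suc l \<le> (D x t / C') ^ l * P {} 1 t" for x t
      using eve_pointwise[OF v l] unfolding W_def D_def P_def Ks_def Ks'_def C_def C'_def .
    have "(\<Sum>t\<in>T. \<Sum>x\<in>X. D x t) = M * C'"
      unfolding D_def P_def T_def X_def M_def C'_def card_Ks(2)[symmetric]
      by (rule sum_pmf_transcripts_family[OF v]) (simp add: Ks'_def)
    then show "(\<Sum>t\<in>T. \<Sum>x\<in>X. D x t / C') = M"
      using C'0 by (simp add: sum_divide_distrib[symmetric])
    show "(\<Sum>t\<in>T. P {} 1 t) = 1"
      unfolding T_def P_def by (rule sum_pmf_transcripts[OF v]) auto
  qed (use X M0 l C0 C'0 W0 D0 finite_transcripts[OF v] in \<open>auto simp: P_def T_def\<close>)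
  also have "\<dots> = M powr (real l / real (Suc l) - 1)" using M0 by (simp add: powr_diff)
  also have "real l / real (Suc l) - 1 = - 1 / real (Suc l)" by (simp add: field_simps)
  finally show ?thesis unfolding M_def .
qed

lemma Succ_le_power:
  fixes \<pi> :: "'m protocol" and h :: real
  assumes v: "valid_protocol n N \<pi>" and l: "1 \<le> l" "l < n"
  shows "Succ h l n \<pi> N \<le> 2 powr (- h / real (Suc l))"
  unfolding Succ_def
proof (rule cSUP_least)
  fix f :: "'m list \<Rightarrow> nat"
  let ?G = "{g. \<forall>T y. g T y \<in> {1..n}}"
  have "1 \<le> n" using l by simp
  then have "eve \<pi> n \<in> ?G" using eve_range by blast
  moreover have "bdd_below ((\<lambda>g. succ_win h l n \<pi> N f g) ` ?G)"
    by (rule bdd_belowI[of _ 0]) (auto simp: succ_win_def)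
  ultimately have "(INF g\<in>?G. succ_win h l n \<pi> N f g) \<le> succ_win h l n \<pi> N f (eve \<pi> n)"
    by (rule cINF_lower[rotated])
  also have "\<dots> \<le> real ((2::nat) ^ nat \<lceil>h\<rceil>) powr (- 1 / real (Suc l))"
    by (rule eve_win_bound[OF v l])
  also have "\<dots> \<le> (2 powr h) powr (- 1 / real (Suc l))"
  proof (rule powr_mono2')
    have "(2::real) powr h \<le> 2 powr real (nat \<lceil>h\<rceil>)"
      by (intro powr_mono) (auto simp: real_nat_ceiling_ge)
    then show "2 powr h \<le> real ((2::nat) ^ nat \<lceil>h\<rceil>)" by (simp add: powr_realpow)
  qed auto
  also have "\<dots> = 2 powr (- h / real (Suc l))" by (simp add: powr_powr)
  finally show "(INF g\<in>?G. succ_win h l n \<pi> N f g) \<le> 2 powr (- h / real (Suc l))" .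
qed simp

theorem lemma5p9:
  fixes c h :: real and l n N :: nat and \<pi> :: "'m protocol"
  assumes "0 < c" and "c < 1" and "0 < h"
    and "1 \<le> l" and "l < n"
    and "valid_protocol n N \<pi>"
  shows "Succ h l n \<pi> N \<le>
    1 - (c * h + real l * log 2 (1 - c) + real l * c * log 2 (exp 1) - c) / h"
proof -
  have "Succ h l n \<pi> N \<le> 2 powr (- h / real (Suc l))"
    using assms by (intro Succ_le_power) auto
  also have "\<dots> \<le> 1 - (c * h + real l * log 2 (1 - c) + real l * c * log 2 (exp 1) - c) / h"
    using assms by (intro exponent_bound) auto
  finally show ?thesis .
qed

end
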